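(* Fix integers $d\ge 1$, $N\ge 1$, $k\ge 1$, $a\in\{1,\dots,N\}$, $b\ge 2$ with $2^{b-1}>N$, a constant $m>0$, and power-law constants $\phi>0$, $\alpha<0$. Let $\mathbf{U}\in\mathbb{R}^d$ be a model-update vector whose entries, ranked in descending order of absolute value as $U\{1\},\dots,U\{d\}$, satisfy the power-law model $|U\{l\}|=\phi\, l^{\alpha}$ for $l=1,\dots,d$ (the paper's power-law assumption, used with equality in the bound), and let $f=\frac{2^{b-1}-N}{Nm}$. Define $$p_l=\frac{l^{\alpha}}{\sum_{l'=1}^d (l')^{\alpha}},\qquad q_l=1-(1-p_l)^k,\qquad r_l=\sum_{j=a}^{N}\binom{N}{j}q_l^{\,j}(1-q_l)^{N-j}.$$ Let $\Pi(\Theta(f\mathbf{U}))$ be the compressed vector obtained by: (i) quantizing each entry $fU_l$ of $f\mathbf{U}$ by the stochastic rounding $\theta$ below; (ii) multiplying the result by $v_l\in\{0,1\}$, where the coordinate holding the $l$-th largest entry $U\{l\}$ has $v_l=1$ with probability $r_l$ (the probability that at least $a$ of the $N$ clients voted for it, each client independently voting for it with probability $q_l$), the selection being independent of the rounding randomness. Then $$\mathbb{E}\big\|\Pi(\Theta(f\mathbf{U}))-f\mathbf{U}\big\|^2\le \gamma\,\|f\mathbf{U}\|^2,\qquad \gamma=1-\frac{\sum_{l=1}^d r_l\, l^{2\alpha}}{\sum_{l=1}^d l^{2\alpha}}+\frac{1}{4f^2}\,\frac{\sum_{l=1}^d r_l}{\phi^2\sum_{l=1}^d l^{2\alpha}}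.$$
   Context: Setting (FediAC in-network federated learning): $N$ clients each hold a model-update vector in $\mathbb{R}^d$. In the voting phase each client votes for $k$ coordinates by $k$ independent draws, the $l$-th largest (in absolute value) coordinate being drawn with probability $p_l$; a coordinate therefore receives that client's vote with probability $q_l$. A programmable switch sums the 0-1 vote arrays and keeps a coordinate (global index array entry $v_l=1$) iff it received at least $a$ votes, otherwise $v_l=0$. Stochastic integer rounding: for a real $x$, $\theta(x)=\lfloor x\rfloor$ with probability $\lceil x\rceil-x$ and $\theta(x)=\lceil x\rceil$ with probability $x-\lfloor x\rfloor$ (so $\mathbb{E}\theta(x)=x$); $\Theta$ applies $\theta$ entrywise. Sparsification $\Pi$ multiplies each entry by $v_l$. Here $m$ denotes the maximum absolute value of model updates and $f$ is the scaling factor applied before quantization to $b$-bit integers. *)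

theory Defs
  imports "HOL-Probability.Probability"
begin

definition theta_pmf :: "real \<Rightarrow> real pmf" where
  "theta_pmf x = map_pmf (\<lambda>up. if up then real_of_int \<lceil>x\<rceil> else real_of_int \<lfloor>x\<rfloor>)
                         (bernoulli_pmf (x - real_of_int \<lfloor>x\<rfloor>))"

definition fediac_p :: "real \<Rightarrow> nat \<Rightarrow> nat \<Rightarrow> real" where
  "fediac_p \<alpha> d l = real l powr \<alpha> / (\<Sum>l'=1..d. real l' powr \<alpha>)"

definition fediac_q :: "real \<Rightarrow> nat \<Rightarrow> nat \<Rightarrow> nat \<Rightarrow> real" where
  "fediac_q \<alpha> d k l = 1 - (1 - fediac_p \<alpha> d l) ^ k"

definition fediac_r :: "real \<Rightarrow> nat \<Rightarrow> nat \<Rightarrow> nat \<Rightarrow> nat \<Rightarrow> nat \<Rightarrow> real" where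
  "fediac_r \<alpha> d k N a l =
     (\<Sum>j=a..N. real (N choose j) * fediac_q \<alpha> d k l ^ j * (1 - fediac_q \<alpha> d k l) ^ (N - j))"

end

theory Submission
  imports Defs
begin

text \<open>Each squared error ((if v_i then t_i else 0) - x_i)^2 depends on a single coordinate, whose
  law under the product of the vote distribution and the independent roundings is
  Bernoulli(r) \<times> theta(x_i). A kept coordinate contributes the rounding variance
  frac x_i (1 - frac x_i) \<le> 1/4, a dropped one contributes x_i^2. Summing over the
  coordinates in rank order and inserting the power law (f U{l})^2 = f^2 \<phi>^2 l^(2\<alpha>)
  turns the bound into \<gamma> \<parallel>f U\<parallel>^2; the bound m and the bit width b enter only through f > 0.\<close>

lemma binomial_tail_bounds:
  fixes q :: real
  assumes "0 \<le> q" "q \<le> 1"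
  shows "0 \<le> (\<Sum>j=a..N. real (N choose j) * q ^ j * (1 - q) ^ (N - j))"
    and "(\<Sum>j=a..N. real (N choose j) * q ^ j * (1 - q) ^ (N - j)) \<le> 1"
proof -
  have term_nonneg: "0 \<le> real (N choose j) * q ^ j * (1 - q) ^ (N - j)" for j
    using assms by simp
  then show "0 \<le> (\<Sum>j=a..N. real (N choose j) * q ^ j * (1 - q) ^ (N - j))"
    by (simp add: sum_nonneg)
  have "(\<Sum>j=a..N. real (N choose j) * q ^ j * (1 - q) ^ (N - j))
      \<le> (\<Sum>j\<le>N. real (N choose j) * q ^ j * (1 - q) ^ (N - j))"
    using term_nonneg by (intro sum_mono2) auto
  also have "\<dots> = (q + (1 - q)) ^ N"
    unfolding binomial_ring ..
  finally show "(\<Sum>j=a..N. real (N choose j) * q ^ j * (1 - q) ^ (N - j)) \<le> 1"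
    by simp
qed

lemma fediac_p_bounds:
  assumes "l \<in> {1..d}"
  shows "0 \<le> fediac_p \<alpha> d l" and "fediac_p \<alpha> d l \<le> 1"
proof -
  have pos: "0 < real l powr \<alpha>"
    using assms by simp
  have le_sum: "real l powr \<alpha> \<le> (\<Sum>l'=1..d. real l' powr \<alpha>)"
    using assms by (intro member_le_sum) auto
  show "0 \<le> fediac_p \<alpha> d l"
    unfolding fediac_p_def using pos le_sum by (intro divide_nonneg_nonneg) linarith+
  show "fediac_p \<alpha> d l \<le> 1"
    unfolding fediac_p_def using pos le_sum by (subst divide_le_eq_1_pos) linarith+
qed

lemma fediac_r_bounds:
  assumes "l \<in> {1..d}"
  shows "0 \<le> fediac_r \<alpha> d k N a l" and "fediac_r \<alpha> d k N a l \<le> 1"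
proof -
  have "0 \<le> fediac_q \<alpha> d k l" "fediac_q \<alpha> d k l \<le> 1"
    using fediac_p_bounds[OF assms] unfolding fediac_q_def by (auto intro: power_le_one)
  then show "0 \<le> fediac_r \<alpha> d k N a l" "fediac_r \<alpha> d k N a l \<le> 1"
    unfolding fediac_r_def by (rule binomial_tail_bounds)+
qed

lemma finite_set_theta_pmf: "finite (set_pmf (theta_pmf x))"
  unfolding theta_pmf_def by simp

lemma expectation_theta_pmf:
  "measure_pmf.expectation (theta_pmf x) g
     = frac x * g (real_of_int \<lceil>x\<rceil>) + (1 - frac x) * g (real_of_int \<lfloor>x\<rfloor>)"
  using frac_lt_1[of x] unfolding theta_pmf_def frac_def by simp

lemma variance_theta_pmf:
  "measure_pmf.expectation (theta_pmf x) (\<lambda>t. (t - x)\<^sup>2) = frac x * (1 - frac x)"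
proof (cases "x \<in> \<int>")
  case True
  then show ?thesis by (auto simp: expectation_theta_pmf elim: Ints_cases)
next
  case False
  then have ceiling_eq: "real_of_int \<lceil>x\<rceil> = x + (1 - frac x)"
    by (auto simp: ceiling_altdef frac_def Ints_def)
  have floor_eq: "real_of_int \<lfloor>x\<rfloor> = x - frac x"
    by (simp add: frac_def)
  show ?thesis
    unfolding expectation_theta_pmf ceiling_eq floor_eq by (simp add: power2_eq_square algebra_simps)
qed

lemma expectation_pair_pmf_finite:
  fixes f :: "'a \<times> 'b \<Rightarrow> real"
  assumes "finite (set_pmf A)" and "finite (set_pmf B)"
  shows "measure_pmf.expectation (pair_pmf A B) f
           = measure_pmf.expectation A (\<lambda>a. measure_pmf.expectation B (\<lambda>b. f (a, b)))"
proof -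
  have "measure_pmf.expectation (pair_pmf A B) f
      = (\<Sum>z\<in>set_pmf A \<times> set_pmf B. f z * pmf (pair_pmf A B) z)"
    using assms by (intro integral_measure_pmf_real) auto
  also have "\<dots> = (\<Sum>(a, b)\<in>set_pmf A \<times> set_pmf B. f (a, b) * pmf B b * pmf A a)"
    by (intro sum.cong) (auto simp: pmf_pair)
  also have "\<dots> = (\<Sum>a\<in>set_pmf A. (\<Sum>b\<in>set_pmf B. f (a, b) * pmf B b) * pmf A a)"
    by (simp add: sum.cartesian_product sum_distrib_right)
  also have "\<dots> = measure_pmf.expectation A (\<lambda>a. measure_pmf.expectation B (\<lambda>b. f (a, b)))"
    using assms by (simp add: integral_measure_pmf_real)
  finally show ?thesis .
qed

lemma expectation_sparsified_rounding_error:
  assumes "0 \<le> p" and "p \<le> 1"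
  shows "measure_pmf.expectation (pair_pmf (bernoulli_pmf p) (theta_pmf x))
           (\<lambda>(v, t). ((if v then t else 0) - x)\<^sup>2)
         = p * (frac x * (1 - frac x)) + (1 - p) * x\<^sup>2"
proof -
  have "measure_pmf.expectation (pair_pmf (bernoulli_pmf p) (theta_pmf x))
          (\<lambda>(v, t). ((if v then t else 0) - x)\<^sup>2)
      = measure_pmf.expectation (bernoulli_pmf p)
          (\<lambda>v. measure_pmf.expectation (theta_pmf x) (\<lambda>t. ((if v then t else 0) - x)\<^sup>2))"
    by (simp add: expectation_pair_pmf_finite finite_set_theta_pmf)
  then show ?thesis
    using assms by (simp add: variance_theta_pmf)
qed

lemma expectation_sparsified_rounding_sum_error:
  fixes V :: "('a \<Rightarrow> bool) pmf" and p x :: "'a \<Rightarrow> real"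
  assumes "finite I"
    and marginal: "\<And>i. i \<in> I \<Longrightarrow> map_pmf (\<lambda>v. v i) V = bernoulli_pmf (p i)"
    and p_bounds: "\<And>i. i \<in> I \<Longrightarrow> 0 \<le> p i \<and> p i \<le> 1"
  shows "measure_pmf.expectation (pair_pmf V (Pi_pmf I 0 (\<lambda>i. theta_pmf (x i))))
           (\<lambda>(v, t). \<Sum>i\<in>I. ((if v i then t i else 0) - x i)\<^sup>2)
         = (\<Sum>i\<in>I. p i * (frac (x i) * (1 - frac (x i))) + (1 - p i) * (x i)\<^sup>2)"
proof -
  define P where "P = pair_pmf V (Pi_pmf I 0 (\<lambda>i. theta_pmf (x i)))"
  define coord where "coord i = (\<lambda>(v :: 'a \<Rightarrow> bool, t :: 'a \<Rightarrow> real). (v i, t i))" for i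
  define err where "err c = (\<lambda>(v, t). ((if v then t else 0) - c)\<^sup>2)" for c :: real
  have coord_P: "map_pmf (coord i) P = pair_pmf (bernoulli_pmf (p i)) (theta_pmf (x i))"
    if "i \<in> I" for i
    using that \<open>finite I\<close> unfolding P_def coord_def
    by (simp add: map_pair marginal Pi_pmf_component)
  have integrable: "integrable P (\<lambda>z. err (x i) (coord i z))" if "i \<in> I" for i
    using coord_P[OF that] integrable_map_pmf_eq[of "coord i" P "err (x i)"]
    by (simp add: integrable_measure_pmf_finite finite_set_theta_pmf)
  have integrand: "(\<lambda>(v, t). \<Sum>i\<in>I. ((if v i then t i else 0) - x i)\<^sup>2)
      = (\<lambda>z. \<Sum>i\<in>I. err (x i) (coord i z))"
    by (auto simp: coord_def err_def)
  have "measure_pmf.expectation P (\<lambda>(v, t). \<Sum>i\<in>I. ((if v i then t i else 0) - x i)\<^sup>2)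
      = (\<Sum>i\<in>I. measure_pmf.expectation P (\<lambda>z. err (x i) (coord i z)))"
    unfolding integrand using integrable by (rule Bochner_Integration.integral_sum)
  also have "\<dots> = (\<Sum>i\<in>I. measure_pmf.expectation (map_pmf (coord i) P) (err (x i)))"
    by simp
  also have "\<dots> = (\<Sum>i\<in>I. p i * (frac (x i) * (1 - frac (x i))) + (1 - p i) * (x i)\<^sup>2)"
    using p_bounds by (intro sum.cong) (simp_all add: coord_P err_def expectation_sparsified_rounding_error)
  finally show ?thesis
    unfolding P_def .
qed

lemma frac_mult_one_minus_frac_le:
  fixes x :: real
  shows "frac x * (1 - frac x) \<le> 1 / 4"
proof -
  have "1 / 4 - frac x * (1 - frac x) = (frac x - 1 / 2)\<^sup>2"
    by (simp add: power2_eq_square algebra_simps)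
  then show ?thesis
    by (metis diff_ge_0_iff_ge zero_le_power2)
qed

lemma weighted_sum_sq_power_law:
  fixes U :: "nat \<Rightarrow> real"
  assumes "\<forall>l\<in>{1..d}. \<bar>U (\<sigma> l)\<bar> = \<phi> * real l powr \<alpha>"
  shows "(\<Sum>l=1..d. w l * (c * U (\<sigma> l))\<^sup>2)
           = c\<^sup>2 * \<phi>\<^sup>2 * (\<Sum>l=1..d. w l * real l powr (2 * \<alpha>))"
proof -
  have sq_power_law: "(c * U (\<sigma> l))\<^sup>2 = c\<^sup>2 * \<phi>\<^sup>2 * real l powr (2 * \<alpha>)" if "l \<in> {1..d}" for l
  proof -
    have "(c * U (\<sigma> l))\<^sup>2 = c\<^sup>2 * (\<phi> * real l powr \<alpha>)\<^sup>2"
      using assms that by (metis power2_abs power_mult_distrib)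
    also have "\<dots> = c\<^sup>2 * \<phi>\<^sup>2 * real l powr (2 * \<alpha>)"
      using that by (simp add: power_mult_distrib powr_power)
    finally show ?thesis .
  qed
  have "(\<Sum>l=1..d. w l * (c * U (\<sigma> l))\<^sup>2)
      = (\<Sum>l=1..d. c\<^sup>2 * \<phi>\<^sup>2 * (w l * real l powr (2 * \<alpha>)))"
    using sq_power_law by (intro sum.cong) simp_all
  then show ?thesis
    by (simp add: sum_distrib_left)
qed

lemma expectation_ranked_sparsified_rounding_error_le:
  fixes V :: "('a \<Rightarrow> bool) pmf" and x :: "'a \<Rightarrow> real" and r :: "'b \<Rightarrow> real"
  assumes "finite I" and rank: "bij_betw \<sigma> L I"
    and marginal: "\<And>l. l \<in> L \<Longrightarrow> map_pmf (\<lambda>v. v (\<sigma> l)) V = bernoulli_pmf (r l)"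
    and r_bounds: "\<And>l. l \<in> L \<Longrightarrow> 0 \<le> r l \<and> r l \<le> 1"
  shows "measure_pmf.expectation (pair_pmf V (Pi_pmf I 0 (\<lambda>i. theta_pmf (x i))))
           (\<lambda>(v, t). \<Sum>i\<in>I. ((if v i then t i else 0) - x i)\<^sup>2)
         \<le> (\<Sum>l\<in>L. r l / 4 + (1 - r l) * (x (\<sigma> l))\<^sup>2)"
proof -
  define p where "p = r \<circ> the_inv_into L \<sigma>"
  have p_\<sigma>: "p (\<sigma> l) = r l" if "l \<in> L" for l
    using rank that unfolding p_def by (simp add: bij_betw_def the_inv_into_f_f)
  have ranked: "\<exists>l\<in>L. i = \<sigma> l" if "i \<in> I" for i
    using rank that unfolding bij_betw_def by blast
  have p_bounds: "0 \<le> p i \<and> p i \<le> 1" if "i \<in> I" for i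
    using ranked[OF that] p_\<sigma> r_bounds by auto
  have "measure_pmf.expectation (pair_pmf V (Pi_pmf I 0 (\<lambda>i. theta_pmf (x i))))
          (\<lambda>(v, t). \<Sum>i\<in>I. ((if v i then t i else 0) - x i)\<^sup>2)
      = (\<Sum>i\<in>I. p i * (frac (x i) * (1 - frac (x i))) + (1 - p i) * (x i)\<^sup>2)"
  proof (rule expectation_sparsified_rounding_sum_error[OF \<open>finite I\<close> _ p_bounds])
    fix i
    assume "i \<in> I"
    then obtain l where "l \<in> L" "i = \<sigma> l"
      using ranked by blast
    then show "map_pmf (\<lambda>v. v i) V = bernoulli_pmf (p i)"
      using marginal p_\<sigma> by simp
  qed
  also have "\<dots> \<le> (\<Sum>i\<in>I. p i / 4 + (1 - p i) * (x i)\<^sup>2)"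
  proof (intro sum_mono add_right_mono)
    fix i
    assume "i \<in> I"
    then show "p i * (frac (x i) * (1 - frac (x i))) \<le> p i / 4"
      using p_bounds mult_left_mono[OF frac_mult_one_minus_frac_le, of "p i"] by simp
  qed
  also have "\<dots> = (\<Sum>l\<in>L. p (\<sigma> l) / 4 + (1 - p (\<sigma> l)) * (x (\<sigma> l))\<^sup>2)"
    by (rule sum.reindex_bij_betw[OF rank, symmetric])
  also have "\<dots> = (\<Sum>l\<in>L. r l / 4 + (1 - r l) * (x (\<sigma> l))\<^sup>2)"
    using p_\<sigma> by (intro sum.cong) simp_all
  finally show ?thesis .
qed

theorem proposition1:
  fixes d N k a b :: nat
    and m \<phi> \<alpha> f :: real
    and U :: "nat \<Rightarrow> real"
    and \<sigma> :: "nat \<Rightarrow> nat"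
    and V :: "(nat \<Rightarrow> bool) pmf"
  assumes "d \<ge> 1" and "N \<ge> 1" and "k \<ge> 1" and "a \<in> {1..N}"
    and "b \<ge> 2" and "2 ^ (b - 1) > N"
    and "m > 0" and "\<phi> > 0" and "\<alpha> < 0"
    and m_max: "\<forall>l\<in>{1..d}. \<bar>U l\<bar> \<le> m"
    and rank: "bij_betw \<sigma> {1..d} {1..d}"
    and power_law: "\<forall>l\<in>{1..d}. \<bar>U (\<sigma> l)\<bar> = \<phi> * real l powr \<alpha>"
    and f_def: "f = (2 ^ (b - 1) - real N) / (real N * m)"
    and vote: "\<forall>l\<in>{1..d}. map_pmf (\<lambda>v. v (\<sigma> l)) V = bernoulli_pmf (fediac_r \<alpha> d k N a l)"
  shows "measure_pmf.expectation
           (pair_pmf V (Pi_pmf {1..d} 0 (\<lambda>i. theta_pmf (f * U i))))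
           (\<lambda>(v, t). \<Sum>i=1..d. ((if v i then t i else 0) - f * U i)\<^sup>2)
         \<le> (1 - (\<Sum>l=1..d. fediac_r \<alpha> d k N a l * real l powr (2 * \<alpha>)) / (\<Sum>l=1..d. real l powr (2 * \<alpha>))
              + 1 / (4 * f\<^sup>2) * (\<Sum>l=1..d. fediac_r \<alpha> d k N a l)
                  / (\<phi>\<^sup>2 * (\<Sum>l=1..d. real l powr (2 * \<alpha>))))
           * (\<Sum>i=1..d. (f * U i)\<^sup>2)"
proof -
  define r where "r = fediac_r \<alpha> d k N a"
  define S where "S = (\<Sum>l=1..d. real l powr (2 * \<alpha>))"
  have sq_power_law_sum: "(\<Sum>l=1..d. w l * (f * U (\<sigma> l))\<^sup>2)
      = f\<^sup>2 * \<phi>\<^sup>2 * (\<Sum>l=1..d. w l * real l powr (2 * \<alpha>))" for w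
    using power_law by (rule weighted_sum_sq_power_law)
  have f_pos: "f > 0"
    unfolding f_def using \<open>2 ^ (b - 1) > N\<close> \<open>N \<ge> 1\<close> \<open>m > 0\<close> by (intro divide_pos_pos) auto
  have S_pos: "S > 0"
    unfolding S_def using \<open>d \<ge> 1\<close> by (intro sum_pos) auto
  have "measure_pmf.expectation (pair_pmf V (Pi_pmf {1..d} 0 (\<lambda>i. theta_pmf (f * U i))))
          (\<lambda>(v, t). \<Sum>i=1..d. ((if v i then t i else 0) - f * U i)\<^sup>2)
      \<le> (\<Sum>l=1..d. r l / 4 + (1 - r l) * (f * U (\<sigma> l))\<^sup>2)"
    using rank vote fediac_r_bounds unfolding r_def
    by (intro expectation_ranked_sparsified_rounding_error_le) auto
  also have "\<dots> = (\<Sum>l=1..d. r l) / 4 + f\<^sup>2 * \<phi>\<^sup>2 * (S - (\<Sum>l=1..d. r l * real l powr (2 * \<alpha>)))"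
    using sq_power_law_sum[of "\<lambda>_. 1"] sq_power_law_sum[of r]
    by (simp add: S_def sum.distrib sum_subtractf sum_divide_distrib algebra_simps)
  also have "\<dots> = (1 - (\<Sum>l=1..d. r l * real l powr (2 * \<alpha>)) / S
                    + 1 / (4 * f\<^sup>2) * (\<Sum>l=1..d. r l) / (\<phi>\<^sup>2 * S)) * (f\<^sup>2 * \<phi>\<^sup>2 * S)"
    using f_pos S_pos \<open>\<phi> > 0\<close> by (simp add: field_simps)
  also have "f\<^sup>2 * \<phi>\<^sup>2 * S = (\<Sum>i=1..d. (f * U i)\<^sup>2)"
    using sq_power_law_sum[of "\<lambda>_. 1"] sum.reindex_bij_betw[OF rank, of "\<lambda>i. (f * U i)\<^sup>2"]
    by (simp add: S_def)
  finally show ?thesis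
    unfolding r_def S_def .
qed

end
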